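(* Let $(X,(\cdot,\cdot|\cdot))$ be a 2-inner product space over $\mathbb{K}\in\{\mathbb{R},\mathbb{C}\}$, let $n$ be a positive integer, let $z_1,\dots,z_n,z\in X$ and $\mu_1,\dots,\mu_n\in\mathbb{K}$. Then \[ \Big\|\sum_{i=1}^n\mu_iz_i\,\Big|\,z\Big\|^2\le \sum_{i=1}^n|\mu_i|^2\max_{1\le i\le n}\|z_i|z\|^2+\Big[\Big(\sum_{i=1}^n|\mu_i|^2\Big)^2-\sum_{i=1}^n|\mu_i|^4\Big]^{1/2}\Big(\sum_{1\le i\ne j\le n}|(z_i,z_j|z)|^2\Big)^{1/2} \] \[ \le \sum_{i=1}^n|\mu_i|^2\left\{\max_{1\le i\le n}\|z_i|z\|^2+\Big(\sum_{1\le i\ne j\le n}|(z_i,z_j|z)|^2\Big)^{1/2}\right\}. \]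
   Context: A 2-inner product on a linear space $X$ of dimension greater than $1$ over $\mathbb{K}$ ($\mathbb{K}=\mathbb{R}$ or $\mathbb{C}$) is a function $(\cdot,\cdot|\cdot):X\times X\times X\to\mathbb{K}$ such that for all $x,x',y,z\in X$ and $\alpha\in\mathbb{K}$: (i) $(x,x|z)\ge 0$, and $(x,x|z)=0$ iff $x$ and $z$ are linearly dependent; (ii) $(x,x|z)=(z,z|x)$; (iii) $(y,x|z)=\overline{(x,y|z)}$; (iv) $(\alpha x,y|z)=\alpha(x,y|z)$; (v) $(x+x',y|z)=(x,y|z)+(x',y|z)$. The associated 2-norm is $\|x|z\|=\sqrt{(x,x|z)}$. The sum $\sum_{1\le i\ne j\le n}$ runs over all ordered pairs $(i,j)$ with $i\ne j$. *)

theory Defs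
  imports "HOL-Analysis.Analysis"
begin

definition lin_dep2 :: "('k::field \<Rightarrow> 'v::ab_group_add \<Rightarrow> 'v) \<Rightarrow> 'v \<Rightarrow> 'v \<Rightarrow> bool" where
  "lin_dep2 sc x z \<longleftrightarrow> (\<exists>a b. (a \<noteq> 0 \<or> b \<noteq> 0) \<and> sc a x + sc b z = 0)"

text \<open>A 2-inner product on the vector space (UNIV, sc) over the field 'k, where
  conj is the conjugation of 'k (identity for real scalars, cnj for complex scalars).
  The space is required to have dimension greater than 1.\<close>
definition two_inner_product ::
  "('k::real_normed_field \<Rightarrow> 'k) \<Rightarrow> ('k \<Rightarrow> 'v::ab_group_add \<Rightarrow> 'v) \<Rightarrow> ('v \<Rightarrow> 'v \<Rightarrow> 'v \<Rightarrow> 'k) \<Rightarrow> bool" where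
  "two_inner_product cj sc ip \<longleftrightarrow>
     vector_space sc \<and>
     (\<exists>x y. \<not> lin_dep2 sc x y) \<and>
     (\<forall>x z. \<exists>r::real. r \<ge> 0 \<and> ip x x z = of_real r) \<and>
     (\<forall>x z. ip x x z = 0 \<longleftrightarrow> lin_dep2 sc x z) \<and>
     (\<forall>x z. ip x x z = ip z z x) \<and>
     (\<forall>x y z. ip y x z = cj (ip x y z)) \<and>
     (\<forall>a x y z. ip (sc a x) y z = a * ip x y z) \<and>
     (\<forall>x x' y z. ip (x + x') y z = ip x y z + ip x' y z)"

definition two_norm :: "('v \<Rightarrow> 'v \<Rightarrow> 'v \<Rightarrow> 'k::real_normed_field) \<Rightarrow> 'v \<Rightarrow> 'v \<Rightarrow> real" where
  "two_norm ip x z = sqrt (norm (ip x x z))"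

text \<open>The chain of inequalities of Corollary 2.3 for given n, z_1..z_n, z, mu_1..mu_n
  (the sum over i ~= j runs over ordered pairs).\<close>
definition cor23_chain ::
  "('k::real_normed_field \<Rightarrow> 'v::ab_group_add \<Rightarrow> 'v) \<Rightarrow> ('v \<Rightarrow> 'v \<Rightarrow> 'v \<Rightarrow> 'k) \<Rightarrow> nat \<Rightarrow> (nat \<Rightarrow> 'v) \<Rightarrow> 'v \<Rightarrow> (nat \<Rightarrow> 'k) \<Rightarrow> bool" where
  "cor23_chain sc ip n zs z \<mu> \<longleftrightarrow>
     (let M = Max ((\<lambda>i. (two_norm ip (zs i) z)\<^sup>2) ` {1..n});
          S2 = (\<Sum>i=1..n. (norm (\<mu> i))\<^sup>2);
          S4 = (\<Sum>i=1..n. (norm (\<mu> i))^4);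
          P = (\<Sum>i\<in>{1..n}. \<Sum>j\<in>{1..n} - {i}. (norm (ip (zs i) (zs j) z))\<^sup>2)
      in (two_norm ip (\<Sum>i=1..n. sc (\<mu> i) (zs i)) z)\<^sup>2
           \<le> S2 * M + sqrt (S2\<^sup>2 - S4) * sqrt P
       \<and> S2 * M + sqrt (S2\<^sup>2 - S4) * sqrt P \<le> S2 * (M + sqrt P))"

end

theory Submission
  imports Defs
begin

text \<open>Expanding the 2-inner product of \<open>w = \<Sum> \<mu>\<^sub>i z\<^sub>i\<close> with itself gives
  \<open>(w, w|z) = \<Sum>\<^sub>i \<bar>\<mu>\<^sub>i\<bar>\<^sup>2 (z\<^sub>i, z\<^sub>i|z) + \<Sum>\<^sub>i\<^sub>\<noteq>\<^sub>j \<mu>\<^sub>i conj(\<mu>\<^sub>j) (z\<^sub>i, z\<^sub>j|z)\<close>.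
  The diagonal part is bounded by \<open>\<Sum> \<bar>\<mu>\<^sub>i\<bar>\<^sup>2 max \<parallel>z\<^sub>i|z\<parallel>\<^sup>2\<close>; the off-diagonal part is bounded
  by the Cauchy-Schwarz inequality over the index pairs \<open>i \<noteq> j\<close>, where
  \<open>\<Sum>\<^sub>i\<^sub>\<noteq>\<^sub>j \<bar>\<mu>\<^sub>i\<bar>\<^sup>2 \<bar>\<mu>\<^sub>j\<bar>\<^sup>2 = (\<Sum> \<bar>\<mu>\<^sub>i\<bar>\<^sup>2)\<^sup>2 - \<Sum> \<bar>\<mu>\<^sub>i\<bar>\<^sup>4\<close>. Only the sesquilinearity of
  \<open>(\<cdot>, \<cdot>|z)\<close> for fixed \<open>z\<close> is used, and \<open>n \<ge> 1\<close> is not needed: for \<open>n = 0\<close> the junk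
  value \<open>Max {}\<close> is multiplied by an empty sum.\<close>

lemma two_norm_sq: "(two_norm ip x z)\<^sup>2 = norm (ip x x z)"
  by (simp add: two_norm_def)

lemma sum_offdiag_products:
  fixes f :: "'a \<Rightarrow> 'b::comm_ring_1"
  assumes "finite I"
  shows "(\<Sum>i\<in>I. \<Sum>j\<in>I - {i}. f i * f j) = (\<Sum>i\<in>I. f i)\<^sup>2 - (\<Sum>i\<in>I. (f i)\<^sup>2)"
proof -
  have "(\<Sum>i\<in>I. \<Sum>j\<in>I - {i}. f i * f j) = (\<Sum>i\<in>I. f i * (\<Sum>j\<in>I. f j) - (f i)\<^sup>2)"
    using assms by (simp add: sum_diff1 sum_distrib_left right_diff_distrib power2_eq_square)
  also have "\<dots> = (\<Sum>i\<in>I. f i)\<^sup>2 - (\<Sum>i\<in>I. (f i)\<^sup>2)"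
    by (simp add: sum_subtractf sum_distrib_right[symmetric] power2_eq_square)
  finally show ?thesis .
qed

lemma norm_offdiag_sum_le:
  fixes u v :: "'a \<Rightarrow> 'a \<Rightarrow> 'k::real_normed_div_algebra"
  assumes "finite I"
  shows "norm (\<Sum>i\<in>I. \<Sum>j\<in>I - {i}. u i j * v i j)
    \<le> sqrt (\<Sum>i\<in>I. \<Sum>j\<in>I - {i}. (norm (u i j))\<^sup>2) * sqrt (\<Sum>i\<in>I. \<Sum>j\<in>I - {i}. (norm (v i j))\<^sup>2)"
proof -
  define S where "S = Sigma I (\<lambda>i. I - {i})"
  have finite_S: "finite S"
    using assms by (simp add: S_def)
  have Sigma_sum: "(\<Sum>i\<in>I. \<Sum>j\<in>I - {i}. h i j) = (\<Sum>p\<in>S. h (fst p) (snd p))" for h :: "'a \<Rightarrow> 'a \<Rightarrow> 'c::comm_monoid_add"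
    using assms by (simp add: S_def sum.Sigma split_beta)
  have "norm (\<Sum>i\<in>I. \<Sum>j\<in>I - {i}. u i j * v i j) \<le> (\<Sum>p\<in>S. norm (u (fst p) (snd p) * v (fst p) (snd p)))"
    unfolding Sigma_sum by (rule norm_sum)
  also have "\<dots> = (\<Sum>p\<in>S. \<bar>norm (u (fst p) (snd p))\<bar> * \<bar>norm (v (fst p) (snd p))\<bar>)"
    by (simp add: norm_mult)
  also have "\<dots> \<le> L2_set (\<lambda>p. norm (u (fst p) (snd p))) S * L2_set (\<lambda>p. norm (v (fst p) (snd p))) S"
    by (rule L2_set_mult_ineq)
  finally show ?thesis
    by (simp add: L2_set_def Sigma_sum)
qed

lemma sqrt_sq_minus_le:
  fixes s t :: real
  assumes "s \<ge> 0" "t \<ge> 0"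
  shows "sqrt (s\<^sup>2 - t) \<le> s"
  using assms real_sqrt_le_mono[of "s\<^sup>2 - t" "s\<^sup>2"] by simp

locale conj_sesquilinear =
  fixes cj :: "'k::real_normed_field \<Rightarrow> 'k" and sc :: "'k \<Rightarrow> 'v::ab_group_add \<Rightarrow> 'v"
    and B :: "'v \<Rightarrow> 'v \<Rightarrow> 'k"
  assumes cj_add: "cj (a + b) = cj a + cj b"
    and cj_mult: "cj (a * b) = cj a * cj b"
    and norm_cj: "norm (cj a) = norm a"
    and B_commute: "B y x = cj (B x y)"
    and B_scale_left: "B (sc a x) y = a * B x y"
    and B_add_left: "B (x + x') y = B x y + B x' y"
begin

lemma B_add_right: "B x (y + y') = B x y + B x y'"
  by (metis B_commute B_add_left cj_add)

lemma B_scale_right: "B x (sc a y) = cj a * B x y"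
  by (metis B_commute B_scale_left cj_mult)

lemma B_zero_left: "B 0 y = 0"
  using B_add_left[of 0 0 y] by simp

lemma B_zero_right: "B x 0 = 0"
  using B_add_right[of x 0 0] by simp

lemma B_sum_left: "B (\<Sum>i\<in>A. f i) y = (\<Sum>i\<in>A. B (f i) y)"
  by (induction A rule: infinite_finite_induct) (simp_all add: B_zero_left B_add_left)

lemma B_sum_right: "B x (\<Sum>i\<in>A. f i) = (\<Sum>i\<in>A. B x (f i))"
  by (induction A rule: infinite_finite_induct) (simp_all add: B_zero_right B_add_right)

lemma B_combination_self:
  "B (\<Sum>i\<in>I. sc (\<mu> i) (x i)) (\<Sum>i\<in>I. sc (\<mu> i) (x i))
     = (\<Sum>i\<in>I. \<Sum>j\<in>I. \<mu> i * cj (\<mu> j) * B (x i) (x j))"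
  by (simp add: B_sum_left B_sum_right B_scale_left B_scale_right sum_distrib_left mult.assoc)
    (subst sum.swap, simp add: mult.left_commute)

lemma norm_B_combination_le:
  assumes "finite I" and diag_le: "\<And>i. i \<in> I \<Longrightarrow> norm (B (x i) (x i)) \<le> M"
  shows "norm (B (\<Sum>i\<in>I. sc (\<mu> i) (x i)) (\<Sum>i\<in>I. sc (\<mu> i) (x i)))
    \<le> (\<Sum>i\<in>I. (norm (\<mu> i))\<^sup>2) * M
       + sqrt ((\<Sum>i\<in>I. (norm (\<mu> i))\<^sup>2)\<^sup>2 - (\<Sum>i\<in>I. (norm (\<mu> i))^4))
         * sqrt (\<Sum>i\<in>I. \<Sum>j\<in>I - {i}. (norm (B (x i) (x j)))\<^sup>2)"
proof -
  define T where "T i j = \<mu> i * cj (\<mu> j) * B (x i) (x j)" for i j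
  have split_diag: "(\<Sum>i\<in>I. \<Sum>j\<in>I. T i j) = (\<Sum>i\<in>I. T i i) + (\<Sum>i\<in>I. \<Sum>j\<in>I - {i}. T i j)"
    using assms(1) by (simp add: sum.distrib[symmetric] sum.remove)
  have "norm (\<Sum>i\<in>I. T i i) \<le> (\<Sum>i\<in>I. norm (T i i))"
    by (rule norm_sum)
  also have "\<dots> \<le> (\<Sum>i\<in>I. (norm (\<mu> i))\<^sup>2 * M)"
    by (intro sum_mono) (simp add: T_def norm_mult norm_cj power2_eq_square diag_le mult_left_mono)
  finally have diag: "norm (\<Sum>i\<in>I. T i i) \<le> (\<Sum>i\<in>I. (norm (\<mu> i))\<^sup>2) * M"
    by (simp add: sum_distrib_right)
  have "(\<Sum>i\<in>I. \<Sum>j\<in>I - {i}. (norm (\<mu> i * cj (\<mu> j)))\<^sup>2)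
      = (\<Sum>i\<in>I. \<Sum>j\<in>I - {i}. (norm (\<mu> i))\<^sup>2 * (norm (\<mu> j))\<^sup>2)"
    by (simp add: norm_mult norm_cj power_mult_distrib)
  also have "\<dots> = (\<Sum>i\<in>I. (norm (\<mu> i))\<^sup>2)\<^sup>2 - (\<Sum>i\<in>I. (norm (\<mu> i))^4)"
    using sum_offdiag_products[OF assms(1), of "\<lambda>i. (norm (\<mu> i))\<^sup>2"] by simp
  finally have offdiag: "norm (\<Sum>i\<in>I. \<Sum>j\<in>I - {i}. T i j)
      \<le> sqrt ((\<Sum>i\<in>I. (norm (\<mu> i))\<^sup>2)\<^sup>2 - (\<Sum>i\<in>I. (norm (\<mu> i))^4))
        * sqrt (\<Sum>i\<in>I. \<Sum>j\<in>I - {i}. (norm (B (x i) (x j)))\<^sup>2)"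
    using norm_offdiag_sum_le[OF assms(1), of "\<lambda>i j. \<mu> i * cj (\<mu> j)" "\<lambda>i j. B (x i) (x j)"]
    by (simp add: T_def)
  show ?thesis
    using norm_triangle_le[OF add_mono[OF diag offdiag]]
    by (simp add: B_combination_self split_diag[unfolded T_def] T_def)
qed

end

lemma two_inner_product_conj_sesquilinear:
  assumes "two_inner_product cj sc ip"
    and "\<And>a b. cj (a + b) = cj a + cj b" "\<And>a b. cj (a * b) = cj a * cj b" "\<And>a. norm (cj a) = norm a"
  shows "conj_sesquilinear cj sc (\<lambda>x y. ip x y z)"
  using assms unfolding two_inner_product_def conj_sesquilinear_def by blast

lemma cor23_chain_conj_sesquilinear:
  assumes "conj_sesquilinear cj sc (\<lambda>x y. ip x y z)"
  shows "cor23_chain sc ip n zs z \<mu>"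
proof -
  interpret conj_sesquilinear cj sc "\<lambda>x y. ip x y z" by (fact assms)
  define M where "M = Max ((\<lambda>i. (two_norm ip (zs i) z)\<^sup>2) ` {1..n})"
  define S2 where "S2 = (\<Sum>i=1..n. (norm (\<mu> i))\<^sup>2)"
  define S4 where "S4 = (\<Sum>i=1..n. (norm (\<mu> i))^4)"
  define P where "P = (\<Sum>i\<in>{1..n}. \<Sum>j\<in>{1..n} - {i}. (norm (ip (zs i) (zs j) z))\<^sup>2)"
  have "norm (ip (zs i) (zs i) z) \<le> M" if "i \<in> {1..n}" for i
    using that by (auto simp: M_def two_norm_sq[symmetric] intro: Max_ge)
  then have first: "(two_norm ip (\<Sum>i=1..n. sc (\<mu> i) (zs i)) z)\<^sup>2 \<le> S2 * M + sqrt (S2\<^sup>2 - S4) * sqrt P"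
    unfolding two_norm_sq S2_def S4_def P_def by (intro norm_B_combination_le) simp_all
  have "sqrt (S2\<^sup>2 - S4) * sqrt P \<le> S2 * sqrt P"
    by (intro mult_right_mono sqrt_sq_minus_le) (simp_all add: S2_def S4_def P_def sum_nonneg)
  then have second: "S2 * M + sqrt (S2\<^sup>2 - S4) * sqrt P \<le> S2 * (M + sqrt P)"
    by (simp add: distrib_left)
  show ?thesis
    using first second by (simp add: cor23_chain_def Let_def M_def S2_def S4_def P_def)
qed

theorem corollary2p3:
  fixes scaleR' :: "real \<Rightarrow> 'v::ab_group_add \<Rightarrow> 'v" and ipR :: "'v \<Rightarrow> 'v \<Rightarrow> 'v \<Rightarrow> real"
    and scaleC' :: "complex \<Rightarrow> 'w::ab_group_add \<Rightarrow> 'w" and ipC :: "'w \<Rightarrow> 'w \<Rightarrow> 'w \<Rightarrow> complex"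
  shows "(\<forall>n (zs::nat \<Rightarrow> 'v) z (\<mu>::nat \<Rightarrow> real).
            two_inner_product id scaleR' ipR \<and> n \<ge> 1 \<longrightarrow> cor23_chain scaleR' ipR n zs z \<mu>)
       \<and> (\<forall>n (zs::nat \<Rightarrow> 'w) z (\<mu>::nat \<Rightarrow> complex).
            two_inner_product cnj scaleC' ipC \<and> n \<ge> 1 \<longrightarrow> cor23_chain scaleC' ipC n zs z \<mu>)"
proof (intro conjI allI impI)
  fix n :: nat and zs z \<mu>
  assume "two_inner_product id scaleR' ipR \<and> n \<ge> 1"
  then have "conj_sesquilinear id scaleR' (\<lambda>x y. ipR x y z)"
    using two_inner_product_conj_sesquilinear[of id scaleR' ipR z] by simp
  then show "cor23_chain scaleR' ipR n zs z \<mu>"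
    by (rule cor23_chain_conj_sesquilinear)
next
  fix n :: nat and zs z \<mu>
  assume "two_inner_product cnj scaleC' ipC \<and> n \<ge> 1"
  then have "conj_sesquilinear cnj scaleC' (\<lambda>x y. ipC x y z)"
    by (intro two_inner_product_conj_sesquilinear) simp_all
  then show "cor23_chain scaleC' ipC n zs z \<mu>"
    by (rule cor23_chain_conj_sesquilinear)
qed

end
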